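(* Let $n \ge 2$ and $r \in \mathbb{Z}$ with $r \equiv 2 \pmod 3$ and $3 \mid n$. Then neither $\mathcal{E}_{n,r} := \mathcal{P}_n(2;1-r)$ nor $\mathcal{P}_n(r;r)$ is a regular presentation of $Q_{4n}$.
   Context: $Q_{4n}$ is identified with $\langle x, y \mid x^n y^{-2}, xyxy^{-1} \rangle$. A presentation $\langle x, y \mid x^n y^{-2}, R\rangle$ is regular if $x \mapsto x$, $y \mapsto y$ induces a group isomorphism from the group it presents to $Q_{4n}$. For integers $n_1,m_1$, $\mathcal{P}_n(n_1;m_1) = \langle x, y \mid x^n y^{-2},\ x^{n_1} y x^{m_1} y^{-1} x^{1-n_1} y x^{1-m_1} y^{-1} \rangle$. *)

theory Defs
  imports "HOL-Algebra.Algebra"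
begin

(* Words in the free group on two generators x, y.
   A letter is (g, i): g = False means x, g = True means y; i = True means inverse. *)
type_synonym letter = "bool \<times> bool"

definition inv_letter :: "letter \<Rightarrow> letter" where
  "inv_letter a = (fst a, \<not> snd a)"

inductive rel_cong :: "letter list set \<Rightarrow> letter list \<Rightarrow> letter list \<Rightarrow> bool"
  for R :: "letter list set" where
  rc_refl: "rel_cong R u u"
| rc_sym: "rel_cong R u v \<Longrightarrow> rel_cong R v u"
| rc_trans: "rel_cong R u v \<Longrightarrow> rel_cong R v w \<Longrightarrow> rel_cong R u w"
| rc_cancel: "rel_cong R (u @ [a, inv_letter a] @ v) (u @ v)"
| rc_rel: "r \<in> R \<Longrightarrow> rel_cong R (u @ r @ v) (u @ v)"

definition wclass :: "letter list set \<Rightarrow> letter list \<Rightarrow> letter list set" where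
  "wclass R w = {v. rel_cong R w v}"

definition pres_group :: "letter list set \<Rightarrow> letter list set monoid" where
  "pres_group R =
    \<lparr> carrier = range (wclass R),
      monoid.mult = (\<lambda>A B. {w. \<exists>a\<in>A. \<exists>b\<in>B. rel_cong R (a @ b) w}),
      one = wclass R [] \<rparr>"

definition gx :: letter where "gx = (False, False)"
definition gy :: letter where "gy = (True, False)"

definition gpow :: "letter \<Rightarrow> int \<Rightarrow> letter list" where
  "gpow g k = (if k \<ge> 0 then replicate (nat k) g else replicate (nat (- k)) (inv_letter g))"

definition rel_base :: "nat \<Rightarrow> letter list" where
  "rel_base n = gpow gx (int n) @ gpow gy (-2)"

definition Q_rels :: "nat \<Rightarrow> letter list set" where
  "Q_rels n = {rel_base n, [gx, gy, gx, inv_letter gy]}"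

definition regular_pres :: "nat \<Rightarrow> letter list \<Rightarrow> bool" where
  "regular_pres n R \<longleftrightarrow>
     (\<exists>h. h \<in> iso (pres_group {rel_base n, R}) (pres_group (Q_rels n)) \<and>
          h (wclass {rel_base n, R} [gx]) = wclass (Q_rels n) [gx] \<and>
          h (wclass {rel_base n, R} [gy]) = wclass (Q_rels n) [gy])"

definition P_rel :: "int \<Rightarrow> int \<Rightarrow> letter list" where
  "P_rel n1 m1 = gpow gx n1 @ [gy] @ gpow gx m1 @ [inv_letter gy] @
                 gpow gx (1 - n1) @ [gy] @ gpow gx (1 - m1) @ [inv_letter gy]"

end

theory Submission
  imports Defs "HOL-Combinatorics.Transposition"
begin

(* Send x to the 3-cycle (0 1 2) and y to the transposition (2 3) of the naturals. When 3 divides n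
   this kills x^n y^-2; when all x-exponents of the second relator are 2 mod 3 it becomes
   (x^-1 y)^4, which is killed as well because x^-1 y acts as a 4-cycle. So the group presented
   maps onto a permutation group with generators x, y, in which x y x and y act differently.
   In Q_4n, however, x y x = y, and a generator-preserving isomorphism would transport this
   relation back to the presented group. *)

fun word_eval :: "(letter \<Rightarrow> 'a \<Rightarrow> 'a) \<Rightarrow> letter list \<Rightarrow> 'a \<Rightarrow> 'a" where
  "word_eval \<sigma> [] = id"
| "word_eval \<sigma> (a # w) = \<sigma> a \<circ> word_eval \<sigma> w"

lemma word_eval_append: "word_eval \<sigma> (u @ v) = word_eval \<sigma> u \<circ> word_eval \<sigma> v"
  by (induction u) auto

lemma word_eval_replicate: "word_eval \<sigma> (replicate m a) = \<sigma> a ^^ m"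
  by (induction m) auto

lemma word_eval_gpow:
  "word_eval \<sigma> (gpow a k) = (if k \<ge> 0 then \<sigma> a ^^ nat k else \<sigma> (inv_letter a) ^^ nat (- k))"
  by (simp add: gpow_def word_eval_replicate)

lemma rel_cong_word_eval:
  assumes inverse: "\<And>a. \<sigma> a \<circ> \<sigma> (inv_letter a) = id"
    and relators: "\<And>r. r \<in> R \<Longrightarrow> word_eval \<sigma> r = id"
  shows "rel_cong R u v \<Longrightarrow> word_eval \<sigma> u = word_eval \<sigma> v"
proof (induction rule: rel_cong.induct)
  case (rc_cancel u a v)
  show ?case using inverse[of a] by (simp add: word_eval_append fun_eq_iff)
next
  case (rc_rel r u v)
  then show ?case using relators by (simp add: word_eval_append)
qed auto

lemma rel_cong_context: "rel_cong R u v \<Longrightarrow> rel_cong R (w @ u @ z) (w @ v @ z)"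
proof (induction rule: rel_cong.induct)
  case (rc_cancel u a v)
  show ?case using rel_cong.rc_cancel[of R "w @ u" a "v @ z"] by simp
next
  case (rc_rel r u v)
  show ?case using rel_cong.rc_rel[of r R "w @ u" "v @ z"] rc_rel by simp
qed (auto intro: rel_cong.intros)

lemma rel_cong_append:
  assumes "rel_cong R u u'" and "rel_cong R v v'"
  shows "rel_cong R (u @ v) (u' @ v')"
proof (rule rel_cong.rc_trans)
  show "rel_cong R (u @ v) (u' @ v)" using rel_cong_context[OF assms(1), of "[]" v] by simp
  show "rel_cong R (u' @ v) (u' @ v')" using rel_cong_context[OF assms(2), of u' "[]"] by simp
qed

lemma wclass_eq_iff: "wclass R u = wclass R v \<longleftrightarrow> rel_cong R u v"
proof
  assume "wclass R u = wclass R v"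
  moreover have "v \<in> wclass R v" by (simp add: wclass_def rel_cong.rc_refl)
  ultimately have "v \<in> wclass R u" by simp
  then show "rel_cong R u v" by (simp add: wclass_def)
next
  assume "rel_cong R u v"
  then show "wclass R u = wclass R v"
    unfolding wclass_def by (blast intro: rel_cong.rc_trans rel_cong.rc_sym)
qed

lemma wclass_in_carrier: "wclass R w \<in> carrier (pres_group R)"
  by (simp add: pres_group_def)

lemma wclass_mult: "wclass R u \<otimes>\<^bsub>pres_group R\<^esub> wclass R v = wclass R (u @ v)"
  by (auto simp: pres_group_def wclass_def intro: rel_cong.rc_trans rel_cong_append rel_cong.rc_refl)

lemma Q_rels_xyx: "rel_cong (Q_rels n) [gx, gy, gx] [gy]"
proof -
  have "rel_cong (Q_rels n) [gx, gy, gx] ([gx, gy, gx, inv_letter gy] @ [gy])"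
    using rel_cong.rc_cancel[of "Q_rels n" "[gx, gy, gx]" "inv_letter gy" "[]"]
    by (auto simp: inv_letter_def intro: rel_cong.rc_sym)
  moreover have "rel_cong (Q_rels n) ([] @ [gx, gy, gx, inv_letter gy] @ [gy]) ([] @ [gy])"
    by (rule rel_cong.rc_rel) (simp add: Q_rels_def)
  ultimately show ?thesis by (auto intro: rel_cong.rc_trans)
qed

lemma regular_pres_reflects_rel_cong:
  assumes "regular_pres n R" and "rel_cong (Q_rels n) u v"
    and "u \<noteq> []" "v \<noteq> []" "set u \<subseteq> {gx, gy}" "set v \<subseteq> {gx, gy}"
  shows "rel_cong {rel_base n, R} u v"
proof -
  let ?P = "pres_group {rel_base n, R}" and ?Q = "pres_group (Q_rels n)"
  obtain h where "h \<in> iso ?P ?Q"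
    and hx: "h (wclass {rel_base n, R} [gx]) = wclass (Q_rels n) [gx]"
    and hy: "h (wclass {rel_base n, R} [gy]) = wclass (Q_rels n) [gy]"
    using assms(1) unfolding regular_pres_def by blast
  then have hom: "h \<in> hom ?P ?Q" and inj: "inj_on h (carrier ?P)"
    by (auto simp: iso_def bij_betw_def)
  \<comment> \<open>Only positive words: h is merely known to preserve products, and we do not prove
     that \<open>pres_group\<close> satisfies the group axioms.\<close>
  have on_positive_words: "h (wclass {rel_base n, R} w) = wclass (Q_rels n) w"
    if "w \<noteq> []" "set w \<subseteq> {gx, gy}" for w
    using that
  proof (induction w rule: list_nonempty_induct)
    case (single a)
    then show ?case using hx hy by auto
  next
    case (cons a w)
    then have "h (wclass {rel_base n, R} [a]) = wclass (Q_rels n) [a]" using hx hy by auto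
    with cons show ?case
      using hom_mult[OF hom wclass_in_carrier wclass_in_carrier, of "[a]" w]
      by (simp add: wclass_mult)
  qed
  have "h (wclass {rel_base n, R} u) = h (wclass {rel_base n, R} v)"
    using assms(2-) by (simp add: on_positive_words wclass_eq_iff)
  then have "wclass {rel_base n, R} u = wclass {rel_base n, R} v"
    using inj_onD[OF inj] wclass_in_carrier by blast
  then show ?thesis by (simp add: wclass_eq_iff)
qed

lemma not_regular_pres_by_word_eval:
  assumes "\<And>a. \<sigma> a \<circ> \<sigma> (inv_letter a) = id"
    and "word_eval \<sigma> (rel_base n) = id" and "word_eval \<sigma> R = id"
    and "word_eval \<sigma> [gx, gy, gx] \<noteq> word_eval \<sigma> [gy]"
  shows "\<not> regular_pres n R"
proof
  assume "regular_pres n R"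
  then have "rel_cong {rel_base n, R} [gx, gy, gx] [gy]"
    by (rule regular_pres_reflects_rel_cong[OF _ Q_rels_xyx]) auto
  moreover have "word_eval \<sigma> r = id" if "r \<in> {rel_base n, R}" for r
    using that assms(2,3) by auto
  ultimately have "word_eval \<sigma> [gx, gy, gx] = word_eval \<sigma> [gy]"
    using rel_cong_word_eval[of \<sigma>] assms(1) by blast
  with assms(4) show False ..
qed

definition rot3 :: "nat \<Rightarrow> nat" where
  "rot3 k = (if k < 3 then (k + 1) mod 3 else k)"

definition s4_rep :: "letter \<Rightarrow> nat \<Rightarrow> nat" where
  "s4_rep a = (if fst a then transpose 2 3 else if snd a then rot3 ^^ 2 else rot3)"

lemma s4_rep_simps:
  "s4_rep gx = rot3" "s4_rep (inv_letter gx) = rot3 ^^ 2"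
  "s4_rep gy = transpose 2 3" "s4_rep (inv_letter gy) = transpose 2 3"
  by (simp_all add: s4_rep_def gx_def gy_def inv_letter_def)

lemma rot3_funpow_2: "rot3 ^^ 2 = rot3 \<circ> rot3"
  by (simp add: numeral_2_eq_2)

lemma rot3_funpow_3: "rot3 ^^ 3 = id"
proof
  fix k :: nat
  have "(rot3 ^^ 3) k = rot3 (rot3 (rot3 k))" by (simp add: numeral_3_eq_3)
  moreover have "k = 0 \<or> k = 1 \<or> k = 2 \<or> 3 \<le> k" by linarith
  ultimately show "(rot3 ^^ 3) k = id k"
    by (auto simp: rot3_def)
qed

lemma rot3_funpow_mod: "rot3 ^^ (m mod 3) = rot3 ^^ m"
proof
  show "(rot3 ^^ (m mod 3)) x = (rot3 ^^ m) x" for x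
    by (rule funpow_mod_eq) (simp add: rot3_funpow_3)
qed

lemma rot3_inverse: "rot3 \<circ> rot3 ^^ 2 = id" "rot3 ^^ 2 \<circ> rot3 = id"
proof -
  have "rot3 \<circ> rot3 ^^ 2 = rot3 ^^ Suc 2" by (rule funpow.simps(2)[symmetric])
  moreover have "rot3 ^^ 2 \<circ> rot3 = rot3 ^^ Suc 2" by (rule funpow_Suc_right[symmetric])
  ultimately show "rot3 \<circ> rot3 ^^ 2 = id" "rot3 ^^ 2 \<circ> rot3 = id"
    using rot3_funpow_3 by (simp_all add: numeral_3_eq_3)
qed

lemma s4_rep_inverse: "s4_rep a \<circ> s4_rep (inv_letter a) = id"
  using rot3_inverse by (cases a) (auto simp: s4_rep_def inv_letter_def)

lemma s4_rep_gpow_gx: "word_eval s4_rep (gpow gx k) = rot3 ^^ nat (k mod 3)"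
proof (cases "k \<ge> 0")
  case True
  then have "nat (k mod 3) = nat k mod 3" by (simp add: nat_mod_distrib)
  with True show ?thesis by (simp add: word_eval_gpow s4_rep_simps rot3_funpow_mod)
next
  case False
  have "int (2 * nat (- k) mod 3) = 2 * (- k) mod 3" using False by (simp add: zmod_int)
  also have "\<dots> = k mod 3" by (simp add: mod_eq_dvd_iff)
  finally have "nat (k mod 3) = 2 * nat (- k) mod 3" by simp
  with False show ?thesis
    by (simp add: word_eval_gpow s4_rep_simps funpow_mult rot3_funpow_mod)
qed

lemma s4_rep_rel_base:
  assumes "3 dvd n"
  shows "word_eval s4_rep (rel_base n) = id"
proof -
  have "int n mod 3 = 0" using assms by presburger
  then have "word_eval s4_rep (gpow gx (int n)) = id" by (simp add: s4_rep_gpow_gx)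
  moreover have "word_eval s4_rep (gpow gy (- 2)) = id"
    by (simp add: word_eval_gpow s4_rep_simps numeral_2_eq_2)
  ultimately show ?thesis by (simp add: rel_base_def word_eval_append)
qed

lemma x_inv_y_cycle:
  "(rot3 ^^ 2 \<circ> transpose 2 3) 0 = 2" "(rot3 ^^ 2 \<circ> transpose 2 3) 2 = 3"
  "(rot3 ^^ 2 \<circ> transpose 2 3) 3 = 1" "(rot3 ^^ 2 \<circ> transpose 2 3) 1 = 0"
  "4 \<le> k \<Longrightarrow> (rot3 ^^ 2 \<circ> transpose 2 3) k = k"
  by (simp_all add: rot3_funpow_2 rot3_def transpose_def)

lemma x_inv_y_order_4: "(rot3 ^^ 2 \<circ> transpose 2 3) ^^ 4 = id"
proof
  fix k :: nat
  let ?c = "rot3 ^^ 2 \<circ> transpose 2 3"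
  have "(?c ^^ 4) k = ?c (?c (?c (?c k)))" by (simp add: numeral_eq_Suc)
  moreover have "k = 0 \<or> k = 1 \<or> k = 2 \<or> k = 3 \<or> 4 \<le> k" by linarith
  ultimately show "(?c ^^ 4) k = id k"
    by (elim disjE) (simp_all only: x_inv_y_cycle id_apply)
qed

lemma s4_rep_P_rel:
  assumes "a mod 3 = 2" and "b mod 3 = 2"
  shows "word_eval s4_rep (P_rel a b) = id"
proof -
  have x_inv: "word_eval s4_rep (gpow gx e) = rot3 ^^ 2" if "e mod 3 = 2" for e
    using that by (simp add: s4_rep_gpow_gx)
  have "(1 - a) mod 3 = 2" "(1 - b) mod 3 = 2" using assms by presburger+
  moreover have "f ^^ 4 = f \<circ> f \<circ> f \<circ> f" for f :: "nat \<Rightarrow> nat"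
    by (simp add: numeral_eq_Suc o_assoc)
  ultimately have "word_eval s4_rep (P_rel a b) = (rot3 ^^ 2 \<circ> transpose 2 3) ^^ 4"
    using assms by (simp add: P_rel_def word_eval_append x_inv s4_rep_simps o_assoc)
  then show ?thesis by (simp add: x_inv_y_order_4)
qed

lemma s4_rep_xyx_neq_y: "word_eval s4_rep [gx, gy, gx] \<noteq> word_eval s4_rep [gy]"
proof
  assume "word_eval s4_rep [gx, gy, gx] = word_eval s4_rep [gy]"
  then have "word_eval s4_rep [gx, gy, gx] 0 = word_eval s4_rep [gy] 0" by simp
  then show False by (simp add: s4_rep_simps rot3_def)
qed

theorem proposition3p12:
  fixes n :: nat and r :: int
  assumes "n \<ge> 2" and "r mod 3 = 2" and "3 dvd n"
  shows "\<not> regular_pres n (P_rel 2 (1 - r)) \<and> \<not> regular_pres n (P_rel r r)"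
proof -
  have not_regular: "\<not> regular_pres n R" if "word_eval s4_rep R = id" for R
    using s4_rep_inverse s4_rep_rel_base[OF assms(3)] that s4_rep_xyx_neq_y
    by (rule not_regular_pres_by_word_eval)
  have "(1 - r) mod 3 = 2" using assms(2) by presburger
  then show ?thesis
    using assms(2) by (simp add: not_regular s4_rep_P_rel)
qed

end
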